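(* Let $G$ be a torsion-free group, $\mathbb{F}$ a field, $\mathsf{a}$ a unit in $\mathbb{F}[G]$ with $supp(\mathsf{a})=\{1,x,y,xy\}$ where $x,y$ are distinct non-trivial elements of $G$, and let $\mathsf{b}$ be a mate of $\mathsf{a}$. Then $|supp(\mathsf{a})supp(\mathsf{b})|\le 2|supp(\mathsf{b})|-1$.
   Context: $supp(\gamma)=\{x\in G:\gamma_x\ne0\}$; for subsets $B,C\subseteq G$, $BC=\{bc:b\in B,c\in C\}$. A mate of $\mathsf{a}$ is an element $\mathsf{b}$ with $\mathsf{a}\mathsf{b}=1$ such that $|supp(\mathsf{b})|\le|supp(\mathsf{b}')|$ for every $\mathsf{b}'$ with $\mathsf{a}\mathsf{b}'=1$. *)

theory Defs
  imports "HOL-Algebra.Coset"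
begin

definition grp_ring :: "('g, 'm) monoid_scheme \<Rightarrow> ('g \<Rightarrow> 'f::field) set" where
  "grp_ring G = {\<gamma>. (\<forall>z. z \<notin> carrier G \<longrightarrow> \<gamma> z = 0) \<and> finite {z. \<gamma> z \<noteq> 0}}"

definition supp :: "('g, 'm) monoid_scheme \<Rightarrow> ('g \<Rightarrow> 'f::field) \<Rightarrow> 'g set" where
  "supp G \<gamma> = {z \<in> carrier G. \<gamma> z \<noteq> 0}"

definition gr_one :: "('g, 'm) monoid_scheme \<Rightarrow> 'g \<Rightarrow> 'f::field" where
  "gr_one G = (\<lambda>z. if z = \<one>\<^bsub>G\<^esub> then 1 else 0)"

definition gr_mult :: "('g, 'm) monoid_scheme \<Rightarrow> ('g \<Rightarrow> 'f::field) \<Rightarrow> ('g \<Rightarrow> 'f) \<Rightarrow> 'g \<Rightarrow> 'f" where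
  "gr_mult G \<alpha> \<beta> = (\<lambda>z. if z \<in> carrier G
      then (\<Sum>u\<in>supp G \<alpha>. \<alpha> u * \<beta> (inv\<^bsub>G\<^esub> u \<otimes>\<^bsub>G\<^esub> z)) else 0)"

definition gr_unit :: "('g, 'm) monoid_scheme \<Rightarrow> ('g \<Rightarrow> 'f::field) \<Rightarrow> bool" where
  "gr_unit G \<alpha> \<longleftrightarrow> \<alpha> \<in> grp_ring G \<and>
     (\<exists>\<beta>\<in>grp_ring G. gr_mult G \<alpha> \<beta> = gr_one G \<and> gr_mult G \<beta> \<alpha> = gr_one G)"

definition is_mate :: "('g, 'm) monoid_scheme \<Rightarrow> ('g \<Rightarrow> 'f::field) \<Rightarrow> ('g \<Rightarrow> 'f) \<Rightarrow> bool" where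
  "is_mate G \<alpha> \<beta> \<longleftrightarrow> \<beta> \<in> grp_ring G \<and> gr_mult G \<alpha> \<beta> = gr_one G \<and>
     (\<forall>\<beta>'\<in>grp_ring G. gr_mult G \<alpha> \<beta>' = gr_one G \<longrightarrow> card (supp G \<beta>) \<le> card (supp G \<beta>'))"

definition torsion_free :: "('g, 'm) monoid_scheme \<Rightarrow> bool" where
  "torsion_free G \<longleftrightarrow> (\<forall>x\<in>carrier G. \<forall>n::nat. n > 0 \<longrightarrow> x [^]\<^bsub>G\<^esub> n = \<one>\<^bsub>G\<^esub> \<longrightarrow> x = \<one>\<^bsub>G\<^esub>)"

end

(* Write a = a1 + x a2 with a1 = a(1) + a(y) y and a2 = a(x) + a(xy) y, let B = supp b,
   C = B \<union> yB and D = B \<inter> yB.  Then supp(a) supp(b) = C \<union> xC and |C| + |D| = 2|B|, so the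
   bound is equivalent to |C - D| < |C \<inter> xC|.

   Over a torsion-free group a binomial a(1) + a(x) x has no right inverse of finite support, so
   the determinant a(1) a(xy) - a(x) a(y) is nonzero.  Hence C is covered by the supports of
   a1 b and a2 b, and C - D lies in both.  Since a1 b + x (a2 b) = 1, the set
   T = supp(a1 b) \<union> x supp(a2 b) satisfies T - {1} \<subseteq> C \<inter> xC, and T contains C - D together
   with a point x p outside it (x has infinite order).  The count can only fail when T is exactly
   (C - D) \<union> {x p} and 1 \<notin> C \<inter> xC.  Then C - D is a segment of an orbit of x^-1, C lies in a
   segment one step longer, and an endpoint e of that segment lies in D; both y e and y^-1 e are
   then in the segment, which makes y and y^-1 nonnegative powers of one element, so y = 1.

   If xy = 1, a has three terms and it suffices that every element of supp(a) supp(b) other than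
   1 has at least two factorisations, i.e. 2 |supp(a) supp(b)| \<le> |supp a| |supp b| + 1. *)

theory Submission
  imports Defs "HOL-Library.Infinite_Set"
begin

lemma supp_subset_carrier: "supp G \<gamma> \<subseteq> carrier G"
  by (auto simp: supp_def)

lemma finite_supp: "\<gamma> \<in> grp_ring G \<Longrightarrow> finite (supp G \<gamma>)"
  unfolding grp_ring_def supp_def by (auto elim: rev_finite_subset)

lemma right_inverse_sum:
  assumes "gr_mult G \<alpha> \<beta> = gr_one G" "g \<in> carrier G"
  shows "(\<Sum>u\<in>supp G \<alpha>. \<alpha> u * \<beta> (inv\<^bsub>G\<^esub> u \<otimes>\<^bsub>G\<^esub> g))
    = (if g = \<one>\<^bsub>G\<^esub> then 1 else 0)"
  using fun_cong[OF assms(1), of g] assms(2) by (simp add: gr_mult_def gr_one_def)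

section \<open>Translates, powers and torsion-freeness\<close>

lemma torsion_freeD:
  "torsion_free G \<Longrightarrow> x \<in> carrier G \<Longrightarrow> 0 < n \<Longrightarrow> x [^]\<^bsub>G\<^esub> (n::nat) = \<one>\<^bsub>G\<^esub>
    \<Longrightarrow> x = \<one>\<^bsub>G\<^esub>"
  unfolding torsion_free_def by blast

context group
begin

lemma l_coset_eq_image: "a <# H = (\<lambda>h. a \<otimes> h) ` H"
  unfolding l_coset_def by auto

lemma mem_l_coset_iff:
  assumes "a \<in> carrier G" "g \<in> carrier G" "H \<subseteq> carrier G"
  shows "g \<in> a <# H \<longleftrightarrow> inv a \<otimes> g \<in> H"
proof
  assume "g \<in> a <# H"
  then obtain h where "h \<in> H" "g = a \<otimes> h" by (auto simp: l_coset_def)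
  with assms show "inv a \<otimes> g \<in> H" by (auto simp: m_assoc[symmetric])
next
  assume "inv a \<otimes> g \<in> H"
  moreover have "g = a \<otimes> (inv a \<otimes> g)" using assms by (simp add: m_assoc[symmetric])
  ultimately show "g \<in> a <# H" by (auto simp: l_coset_def)
qed

lemma card_l_coset:
  assumes "a \<in> carrier G" "H \<subseteq> carrier G"
  shows "card (a <# H) = card H"
proof -
  have "inj_on (\<lambda>h. a \<otimes> h) H" using assms by (intro inj_onI) (metis Units_eq Units_l_cancel subsetD)
  then show ?thesis unfolding l_coset_eq_image by (rule card_image)
qed

lemma set_mult_four_eq:
  assumes "x \<in> carrier G" "y \<in> carrier G" "B \<subseteq> carrier G"
  shows "{\<one>, x, y, x \<otimes> y} <#> B = (B \<union> (y <# B)) \<union> (x <# (B \<union> (y <# B)))"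
  using assms by (force simp: set_mult_def l_coset_def m_assoc)

lemma finite_set_mult: "finite A \<Longrightarrow> finite B \<Longrightarrow> finite (A <#> B)"
  unfolding set_mult_def by blast

lemma card_le_card_set_mult:
  assumes "finite A" "finite B" "A \<subseteq> carrier G" "B \<subseteq> carrier G" "t \<in> B"
  shows "card A \<le> card (A <#> B)"
proof -
  have "(\<lambda>u. u \<otimes> t) ` A \<subseteq> A <#> B" using assms by (auto simp: set_mult_def)
  moreover have "inj_on (\<lambda>u. u \<otimes> t) A" using assms by (intro inj_onI) (metis right_cancel subsetD)
  moreover have "finite (A <#> B)" using assms(1,2) by (rule finite_set_mult)
  ultimately show ?thesis by (metis card_image card_mono)
qed

lemma mult_nat_pow_mult:
  "z \<in> carrier G \<Longrightarrow> w \<in> carrier G \<Longrightarrow> z \<otimes> (z [^] n \<otimes> w) = z [^] Suc n \<otimes> w"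
  by (metis nat_pow_Suc2 m_assoc nat_pow_closed)

lemma torsion_free_pow_inj:
  assumes "torsion_free G" "z \<in> carrier G" "z \<noteq> \<one>"
  shows "inj (\<lambda>n::nat. z [^] n)"
proof -
  have "z [^] i \<noteq> z [^] j" if "i < j" for i j :: nat
  proof
    assume "z [^] i = z [^] j"
    also have "\<dots> = z [^] i \<otimes> z [^] (j - i)" using that assms by (simp add: nat_pow_mult)
    finally have "z [^] (j - i) = \<one>" using assms by simp
    then show False using assms that torsion_freeD[of G z "j - i"] by simp
  qed
  then show ?thesis by (metis injI linorder_neqE)
qed

lemma torsion_free_orbit_infinite:
  assumes "torsion_free G" "z \<in> carrier G" "z \<noteq> \<one>" "s \<in> carrier G"
  shows "infinite (range (\<lambda>n::nat. z [^] n \<otimes> s))"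
proof -
  have "inj (\<lambda>n::nat. z [^] n \<otimes> s)"
    using torsion_free_pow_inj[OF assms(1-3)] assms(2,4) by (simp add: inj_def)
  then show ?thesis by (rule range_inj_infinite)
qed

lemma torsion_free_exit_point:
  assumes "torsion_free G" "z \<in> carrier G" "z \<noteq> \<one>" "finite S" "S \<subseteq> carrier G" "S \<noteq> {}"
  obtains p where "p \<in> S" "z \<otimes> p \<notin> S"
proof -
  have "\<exists>p\<in>S. z \<otimes> p \<notin> S"
  proof (rule ccontr)
    assume "\<not> (\<exists>p\<in>S. z \<otimes> p \<notin> S)"
    then have stable: "\<And>p. p \<in> S \<Longrightarrow> z \<otimes> p \<in> S" by blast
    obtain s where s: "s \<in> S" using assms by auto
    have "z [^] n \<otimes> s \<in> S" for n :: nat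
    proof (induction n)
      case 0
      then show ?case using s assms by auto
    next
      case (Suc n)
      have "z [^] Suc n \<otimes> s = z \<otimes> (z [^] n \<otimes> s)"
        using s assms by (simp add: mult_nat_pow_mult subsetD)
      then show ?case using stable Suc by simp
    qed
    then have "range (\<lambda>n::nat. z [^] n \<otimes> s) \<subseteq> S" by auto
    then show False
      using torsion_free_orbit_infinite[OF assms(1-3)] s assms(4,5) by (meson finite_subset subsetD)
  qed
  then show thesis using that by blast
qed

lemma torsion_free_chain:
  assumes tf: "torsion_free G" and x: "x \<in> carrier G" "x \<noteq> \<one>"
    and S: "finite S" "S \<subseteq> carrier G" "w \<in> S"
    and stable: "\<And>s. s \<in> S \<Longrightarrow> s \<noteq> w \<Longrightarrow> x \<otimes> s \<in> S"
  obtains k :: nat where "0 < k" "S = (\<lambda>i. inv x [^] i \<otimes> w) ` {..<k}"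
proof -
  define z where "z = inv x"
  have z: "z \<in> carrier G" "z \<noteq> \<one>" using x by (auto simp: z_def)
  have w: "w \<in> carrier G" using S by auto
  have "\<exists>n::nat. z [^] n \<otimes> w \<notin> S"
  proof (rule ccontr)
    assume "\<nexists>n::nat. z [^] n \<otimes> w \<notin> S"
    then have "range (\<lambda>n::nat. z [^] n \<otimes> w) \<subseteq> S" by auto
    then show False using torsion_free_orbit_infinite[OF tf z w] S(1) finite_subset by blast
  qed
  define k where "k = (LEAST n::nat. z [^] n \<otimes> w \<notin> S)"
  have k_out: "z [^] k \<otimes> w \<notin> S"
    unfolding k_def using \<open>\<exists>n. z [^] n \<otimes> w \<notin> S\<close> by (rule LeastI_ex)
  have k_in: "z [^] i \<otimes> w \<in> S" if "i < k" for i
    using not_less_Least[OF that[unfolded k_def]] by blast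
  have "k \<noteq> 0" using k_out S(3) w by (cases k) auto
  define D where "D = (\<lambda>i. z [^] i \<otimes> w) ` {..<k}"
  have "w \<in> D"
  proof -
    have "z [^] (0::nat) \<otimes> w \<in> D"
      unfolding D_def using \<open>k \<noteq> 0\<close> by (intro image_eqI[of _ _ 0]) auto
    then show ?thesis using w by simp
  qed
  have "S - D = {}"
  proof (rule ccontr)
    assume "S - D \<noteq> {}"
    then obtain t where t: "t \<in> S - D" "x \<otimes> t \<notin> S - D"
      using torsion_free_exit_point[OF tf x, of "S - D"] S by blast
    have tc: "t \<in> carrier G" using t S by auto
    have "t \<noteq> w" using t \<open>w \<in> D\<close> by auto
    then have "x \<otimes> t \<in> S" using stable t(1) by simp
    then have "x \<otimes> t \<in> D" using t(2) by simp
    then obtain i where i: "i < k" "x \<otimes> t = z [^] i \<otimes> w" unfolding D_def by auto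
    have "t = z \<otimes> (x \<otimes> t)" using tc x by (simp add: z_def m_assoc[symmetric])
    also have "\<dots> = z [^] Suc i \<otimes> w" using i z w by (simp add: mult_nat_pow_mult)
    finally have t_eq: "t = z [^] Suc i \<otimes> w" .
    show False
    proof (cases "Suc i < k")
      case True
      then have "t \<in> D" unfolding D_def t_eq by (intro image_eqI[where x = "Suc i"]) auto
      then show False using t by simp
    next
      case False
      then have "Suc i = k" using i by simp
      then show False using t t_eq k_out by simp
    qed
  qed
  moreover have "D \<subseteq> S" using k_in unfolding D_def by auto
  ultimately have "S = D" by auto
  with \<open>k \<noteq> 0\<close> show thesis using that unfolding D_def z_def by blast
qed

lemma torsion_free_pow_inv_pow_eq_one:
  assumes "torsion_free G" "u \<in> carrier G" "y = u [^] (i::nat)" "inv y = u [^] (j::nat)"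
  shows "y = \<one>"
proof (cases "i + j = 0")
  case True
  then show ?thesis using assms(3) by simp
next
  case False
  have "u [^] (i + j) = u [^] i \<otimes> u [^] j" using assms(2) by (simp add: nat_pow_mult)
  also have "\<dots> = y \<otimes> inv y" using assms(3,4) by simp
  also have "\<dots> = \<one>" using assms(2,3) by simp
  finally have "u = \<one>" using False assms(1,2) by (intro torsion_freeD[of G u "i + j"]) auto
  then show ?thesis using assms(3) by simp
qed

lemma eq_inv_pow_if_mult_pow_eq:
  assumes "z \<in> carrier G" "y \<in> carrier G" "y \<otimes> z [^] m = z [^] (i::nat)" "i \<le> m"
  shows "y = inv z [^] (m - i)"
proof -
  have "(y \<otimes> z [^] (m - i)) \<otimes> z [^] i = \<one> \<otimes> z [^] i"
    using assms by (simp add: m_assoc nat_pow_mult)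
  then have "y \<otimes> z [^] (m - i) = \<one>"
    using assms right_cancel[of "z [^] i" "y \<otimes> z [^] (m - i)" \<one>] by simp
  then have "inv (z [^] (m - i)) = y" using assms by (simp add: inv_equality)
  then show ?thesis using assms by (simp add: nat_pow_inv)
qed

lemma torsion_free_chain_endpoint:
  fixes i j m :: nat
  assumes tf: "torsion_free G" and c: "z \<in> carrier G" "w \<in> carrier G" "y \<in> carrier G"
    and endpoint: "e = w \<or> e = z [^] m \<otimes> w"
    and i: "y \<otimes> e = z [^] i \<otimes> w" "i \<le> m" and j: "inv y \<otimes> e = z [^] j \<otimes> w" "j \<le> m"
  shows "y = \<one>"
  using endpoint
proof
  assume "e = w"
  then have "y \<otimes> w = z [^] i \<otimes> w" "inv y \<otimes> w = z [^] j \<otimes> w" using i(1) j(1) by simp_all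
  then have "y = z [^] i" "inv y = z [^] j"
    using c right_cancel[of w y "z [^] i"] right_cancel[of w "inv y" "z [^] j"] by auto
  then show ?thesis using tf c(1) by (intro torsion_free_pow_inv_pow_eq_one[of z])
next
  assume e: "e = z [^] m \<otimes> w"
  have "(y \<otimes> z [^] m) \<otimes> w = z [^] i \<otimes> w" "(inv y \<otimes> z [^] m) \<otimes> w = z [^] j \<otimes> w"
    using c i(1) j(1) unfolding e by (simp_all add: m_assoc)
  then have "y \<otimes> z [^] m = z [^] i" "inv y \<otimes> z [^] m = z [^] j"
    using c right_cancel[of w "y \<otimes> z [^] m" "z [^] i"] right_cancel[of w "inv y \<otimes> z [^] m" "z [^] j"]
    by auto
  then have "y = inv z [^] (m - i)" "inv y = inv z [^] (m - j)"
    using c i(2) j(2) eq_inv_pow_if_mult_pow_eq[of z y m i] eq_inv_pow_if_mult_pow_eq[of z "inv y" m j] by simp_all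
  then show ?thesis using tf c(1) by (intro torsion_free_pow_inv_pow_eq_one[of "inv z"]) simp_all
qed

section \<open>Counting factorisations in a product set\<close>

lemma sum_card_factorizations:
  assumes "finite A" "finite B" "A \<subseteq> carrier G" "B \<subseteq> carrier G"
  shows "(\<Sum>z\<in>A <#> B. card {u \<in> A. inv u \<otimes> z \<in> B}) = card A * card B"
proof -
  define R where "R z = {u \<in> A. inv u \<otimes> z \<in> B}" for z
  define f where "f = (\<lambda>(u, t). (u \<otimes> t, u))"
  have "Sigma (A <#> B) R = f ` (A \<times> B)"
  proof (intro equalityI subsetI)
    fix p assume "p \<in> Sigma (A <#> B) R"
    then obtain z u where p: "p = (z, u)" "z \<in> A <#> B" "u \<in> A" "inv u \<otimes> z \<in> B"
      unfolding R_def by auto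
    then have "z \<in> carrier G" "u \<in> carrier G"
      using assms setmult_subset_G by blast+
    then have "z = u \<otimes> (inv u \<otimes> z)" by (simp add: m_assoc[symmetric])
    then show "p \<in> f ` (A \<times> B)" using p unfolding f_def by (auto intro!: image_eqI[of _ _ "(u, inv u \<otimes> z)"])
  next
    fix p assume "p \<in> f ` (A \<times> B)"
    then obtain u t where p: "p = (u \<otimes> t, u)" "u \<in> A" "t \<in> B" unfolding f_def by auto
    then have "inv u \<otimes> (u \<otimes> t) = t" using assms by (simp add: m_assoc[symmetric] subsetD)
    then show "p \<in> Sigma (A <#> B) R" using p unfolding R_def set_mult_def by auto
  qed
  moreover have "inj_on f (A \<times> B)"
  proof (rule inj_onI)
    fix p q assume "p \<in> A \<times> B" "q \<in> A \<times> B" "f p = f q"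
    moreover obtain u t u' t' where "p = (u, t)" "q = (u', t')" by fastforce
    ultimately have "u = u'" "u \<otimes> t = u \<otimes> t'" "u \<in> carrier G" "t \<in> carrier G" "t' \<in> carrier G"
      using assms unfolding f_def by auto
    then show "p = q" using \<open>p = (u, t)\<close> \<open>q = (u', t')\<close> by simp
  qed
  ultimately have "card (Sigma (A <#> B) R) = card A * card B"
    by (simp add: card_image card_cartesian_product)
  moreover have "card (Sigma (A <#> B) R) = (\<Sum>z\<in>A <#> B. card (R z))"
    using assms by (simp add: finite_set_mult R_def)
  ultimately show ?thesis unfolding R_def by simp
qed

lemma two_le_card_factorizations:
  assumes "finite (supp G a)" "gr_mult G a b = gr_one G"
    and z: "z \<in> supp G a <#> supp G b" "z \<noteq> \<one>"
  shows "2 \<le> card {u \<in> supp G a. inv u \<otimes> z \<in> supp G b}"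
proof (rule ccontr)
  define R where "R = {u \<in> supp G a. inv u \<otimes> z \<in> supp G b}"
  obtain u t where ut: "u \<in> supp G a" "t \<in> supp G b" "z = u \<otimes> t"
    using z(1) unfolding set_mult_def by auto
  moreover have "u \<in> carrier G" "t \<in> carrier G" using ut supp_subset_carrier[of G] by auto
  ultimately have "inv u \<otimes> z = t" by (simp add: m_assoc[symmetric])
  then have "u \<in> R" using ut unfolding R_def by simp
  assume "\<not> 2 \<le> card {u \<in> supp G a. inv u \<otimes> z \<in> supp G b}"
  then have "card R \<le> 1" unfolding R_def by simp
  moreover have "finite R" using assms(1) unfolding R_def by simp
  ultimately have "R = {u}" using \<open>u \<in> R\<close> by (auto simp: card_le_Suc0_iff_eq)
  have "supp G a <#> supp G b \<subseteq> carrier G" by (intro setmult_subset_G supp_subset_carrier)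
  then have zc: "z \<in> carrier G" using z(1) by blast
  have "(\<Sum>v\<in>supp G a. a v * b (inv v \<otimes> z)) = (\<Sum>v\<in>R. a v * b (inv v \<otimes> z))"
    using assms(1) zc supp_subset_carrier
    by (intro sum.mono_neutral_right) (auto simp: R_def supp_def)
  also have "\<dots> = a u * b (inv u \<otimes> z)" using \<open>R = {u}\<close> by simp
  also have "\<dots> \<noteq> 0" using \<open>u \<in> R\<close> unfolding R_def supp_def by simp
  finally show False using right_inverse_sum[OF assms(2) zc] z(2) by simp
qed

lemma double_card_set_mult_supp_le:
  assumes "a \<in> grp_ring G" "b \<in> grp_ring G" "gr_mult G a b = gr_one G"
  shows "2 * card (supp G a <#> supp G b) \<le> card (supp G a) * card (supp G b) + 1"
proof -
  let ?A = "supp G a" and ?B = "supp G b"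
  let ?R = "\<lambda>z. card {u \<in> ?A. inv u \<otimes> z \<in> ?B}"
  have fin: "finite ?A" "finite ?B" using assms(1,2) by (simp_all add: finite_supp)
  have "2 \<le> ?R z + (if z = \<one> then 1 else 0)" if z: "z \<in> ?A <#> ?B" for z
  proof (cases "z = \<one>")
    case True
    obtain u t where ut: "u \<in> ?A" "t \<in> ?B" "z = u \<otimes> t" using z unfolding set_mult_def by auto
    moreover have "u \<in> carrier G" "t \<in> carrier G" using ut supp_subset_carrier[of G] by auto
    ultimately have "u \<in> {u \<in> ?A. inv u \<otimes> z \<in> ?B}" by (simp add: m_assoc[symmetric])
    then have "1 \<le> ?R z" using fin by (auto simp: Suc_le_eq card_gt_0_iff)
    then show ?thesis using True by simp
  next
    case False
    then show ?thesis using two_le_card_factorizations[OF fin(1) assms(3) z] by simp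
  qed
  then have "(\<Sum>z\<in>?A <#> ?B. 2) \<le> (\<Sum>z\<in>?A <#> ?B. ?R z + (if z = \<one> then 1 else 0))"
    by (rule sum_mono)
  also have "\<dots> = card ?A * card ?B + (\<Sum>z\<in>?A <#> ?B. if z = \<one> then 1 else 0)"
    using sum_card_factorizations[OF fin supp_subset_carrier supp_subset_carrier] by (simp add: sum.distrib)
  also have "\<dots> \<le> card ?A * card ?B + 1"
    using fin by (simp add: finite_set_mult)
  finally show ?thesis by simp
qed

lemma supp_nonempty_if_right_inverse:
  assumes "gr_mult G \<alpha> \<beta> = gr_one G"
  shows "supp G \<beta> \<noteq> {}"
proof
  assume "supp G \<beta> = {}"
  then have "\<beta> (inv u \<otimes> \<one>) = 0" if "u \<in> supp G \<alpha>" for u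
    using that supp_subset_carrier[of G \<alpha>] by (auto simp: supp_def)
  then show False using right_inverse_sum[OF assms one_closed] by simp
qed

section \<open>Binomials over torsion-free groups\<close>

lemma torsion_free_binomial_not_right_invertible:
  fixes e :: "'a \<Rightarrow> 'f::field" and \<alpha> \<beta> :: 'f
  assumes tf: "torsion_free G" and x: "x \<in> carrier G" "x \<noteq> \<one>"
    and coeffs: "\<alpha> \<noteq> 0" "\<beta> \<noteq> 0" and fin: "finite (supp G e)"
    and inverse: "\<And>g. g \<in> carrier G \<Longrightarrow>
      \<alpha> * e g + \<beta> * e (inv x \<otimes> g) = (if g = \<one> then 1 else 0)"
  shows False
proof -
  let ?E = "supp G e"
  have Ec: "?E \<subseteq> carrier G" by (rule supp_subset_carrier)
  have "?E \<noteq> {}"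
  proof
    assume "?E = {}"
    then have "e \<one> = 0" "e (inv x) = 0" using x by (auto simp: supp_def)
    then show False using inverse[of \<one>] x by simp
  qed
  obtain p where p: "p \<in> ?E" "x \<otimes> p \<notin> ?E"
    using torsion_free_exit_point[OF tf x fin Ec \<open>?E \<noteq> {}\<close>] .
  obtain q where q: "q \<in> ?E" "inv x \<otimes> q \<notin> ?E"
    using torsion_free_exit_point[OF tf _ _ fin Ec \<open>?E \<noteq> {}\<close>, of "inv x"] x by auto
  have pc: "p \<in> carrier G" "e p \<noteq> 0" and qc: "q \<in> carrier G" "e q \<noteq> 0"
    using p(1) q(1) by (auto simp: supp_def)
  \<comment> \<open>Comparing coefficients at the two ends of supp e along x: the right end forces
    x p = 1, the left end forces q = 1, but then x^-1 q = p lies in supp e.\<close>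
  have "inv x \<otimes> (x \<otimes> p) = p" using x pc by (simp add: m_assoc[symmetric])
  moreover have "e (x \<otimes> p) = 0" using p x pc by (simp add: supp_def)
  ultimately have "\<beta> * e p = (if x \<otimes> p = \<one> then 1 else 0)" using inverse[of "x \<otimes> p"] x pc by simp
  then have "x \<otimes> p = \<one>" using coeffs pc by (auto split: if_splits)
  have "e (inv x \<otimes> q) = 0" using q x qc by (simp add: supp_def)
  then have "\<alpha> * e q = (if q = \<one> then 1 else 0)" using inverse[OF qc(1)] by simp
  then have "q = \<one>" using coeffs qc by (auto split: if_splits)
  have "p = inv x" using \<open>x \<otimes> p = \<one>\<close> x pc(1) inv_solve_left[of p x \<one>] by simp
  then show False using p(1) q \<open>q = \<one>\<close> x by simp
qed

end

section \<open>Units with support 1, x, y, xy\<close>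

locale four_term_unit = group +
  fixes a b :: "'a \<Rightarrow> 'f::field" and x y :: 'a
  assumes torsion_free: "torsion_free G"
    and x_closed [simp]: "x \<in> carrier G" and y_closed [simp]: "y \<in> carrier G"
    and x_ne_one: "x \<noteq> \<one>" and y_ne_one: "y \<noteq> \<one>" and x_ne_y: "x \<noteq> y"
    and xy_ne_one: "x \<otimes> y \<noteq> \<one>"
    and supp_a: "supp G a = {\<one>, x, y, x \<otimes> y}"
    and b_in_grp_ring: "b \<in> grp_ring G"
    and right_inverse: "gr_mult G a b = gr_one G"
begin

abbreviation B :: "'a set" where "B \<equiv> supp G b"

text \<open>With a = a1 + x a2, where a1 = a(1) + a(y) y and a2 = a(x) + a(xy) y, these are the
  products a1 b and a2 b, so that a b = a1b + x a2b.\<close>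

definition a1b :: "'a \<Rightarrow> 'f" where "a1b g = a \<one> * b g + a y * b (inv y \<otimes> g)"

definition a2b :: "'a \<Rightarrow> 'f" where "a2b g = a x * b g + a (x \<otimes> y) * b (inv y \<otimes> g)"

definition C :: "'a set" where "C = B \<union> (y <# B)"

definition Cboth :: "'a set" where "Cboth = B \<inter> (y <# B)"

definition Conly :: "'a set" where "Conly = C - Cboth"

definition T :: "'a set" where "T = supp G a1b \<union> (x <# supp G a2b)"

lemma a_nonzero: "a \<one> \<noteq> 0" "a x \<noteq> 0" "a y \<noteq> 0" "a (x \<otimes> y) \<noteq> 0"
proof -
  have "{\<one>, x, y, x \<otimes> y} \<subseteq> supp G a" using supp_a by simp
  then show "a \<one> \<noteq> 0" "a x \<noteq> 0" "a y \<noteq> 0" "a (x \<otimes> y) \<noteq> 0" by (auto simp: supp_def)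
qed

lemma right_inverse_expanded:
  assumes g: "g \<in> carrier G"
  shows "a1b g + a2b (inv x \<otimes> g) = (if g = \<one> then 1 else 0)"
proof -
  have distinct: "\<one> \<noteq> x" "\<one> \<noteq> y" "\<one> \<noteq> x \<otimes> y" "x \<noteq> y" "x \<noteq> x \<otimes> y" "y \<noteq> x \<otimes> y"
    using x_ne_one y_ne_one x_ne_y xy_ne_one by auto
  have "inv (x \<otimes> y) \<otimes> g = inv y \<otimes> (inv x \<otimes> g)" using g by (simp add: inv_mult_group m_assoc)
  then have "(\<Sum>u\<in>supp G a. a u * b (inv u \<otimes> g)) = a1b g + a2b (inv x \<otimes> g)"
    using distinct g unfolding supp_a a1b_def a2b_def by (simp add: algebra_simps)
  then show ?thesis using right_inverse_sum[OF right_inverse g] by simp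
qed

lemma a1b_eq_neg_a2b: "g \<in> carrier G \<Longrightarrow> g \<noteq> \<one> \<Longrightarrow> a1b g = - a2b (inv x \<otimes> g)"
  using right_inverse_expanded by (simp add: eq_neg_iff_add_eq_0)

lemma a1b_one_add_a2b: "a1b \<one> + a2b (inv x) = 1"
  using right_inverse_expanded[of \<one>] by simp

lemma B_subset_carrier: "B \<subseteq> carrier G"
  by (rule supp_subset_carrier)

lemma finite_B: "finite B"
  using b_in_grp_ring by (rule finite_supp)

lemma B_nonempty: "B \<noteq> {}"
  using right_inverse by (rule supp_nonempty_if_right_inverse)

lemma mem_y_coset_iff: "g \<in> carrier G \<Longrightarrow> g \<in> y <# B \<longleftrightarrow> b (inv y \<otimes> g) \<noteq> 0"
  using mem_l_coset_iff[OF y_closed _ B_subset_carrier] by (simp add: supp_def)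

lemma C_eq: "C = {g \<in> carrier G. b g \<noteq> 0 \<or> b (inv y \<otimes> g) \<noteq> 0}"
  using l_coset_subset_G[OF B_subset_carrier y_closed] mem_y_coset_iff
  unfolding C_def by (auto simp: supp_def)

lemma Cboth_eq: "Cboth = {g \<in> carrier G. b g \<noteq> 0 \<and> b (inv y \<otimes> g) \<noteq> 0}"
  using mem_y_coset_iff unfolding Cboth_def by (auto simp: supp_def)

lemma C_subset_carrier: "C \<subseteq> carrier G"
  by (auto simp: C_eq)

lemma finite_C: "finite C"
  using finite_B by (simp add: C_def l_coset_eq_image)

lemma card_C_add_card_Cboth: "card C + card Cboth = 2 * card B"
  using card_Un_Int[OF finite_B, of "y <# B"] finite_B card_l_coset[OF y_closed B_subset_carrier]
  by (simp add: C_def Cboth_def l_coset_eq_image)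

lemma Cboth_subset_C: "Cboth \<subseteq> C"
  by (auto simp: C_def Cboth_def)

lemma card_Conly: "card Conly = card C - card Cboth"
  unfolding Conly_def using Cboth_subset_C finite_C by (meson card_Diff_subset finite_subset)

lemma supp_a1b_subset_C: "supp G a1b \<subseteq> C"
  by (auto simp: supp_def a1b_def C_eq)

lemma supp_a2b_subset_C: "supp G a2b \<subseteq> C"
  by (auto simp: supp_def a2b_def C_eq)

text \<open>If the determinant vanished, a would factor as (a(1) + a(x) x)(1 + r y) with
  r = a(y) / a(1), and (1 + r y) b would be a right inverse of the binomial.\<close>

lemma det_nonzero: "a \<one> * a (x \<otimes> y) \<noteq> a x * a y"
proof
  assume det: "a \<one> * a (x \<otimes> y) = a x * a y"
  define r where "r = a y / a \<one>"
  have r: "a \<one> * r = a y" "a x * r = a (x \<otimes> y)" using det a_nonzero by (simp_all add: r_def field_simps)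
  define e where "e g = b g + r * b (inv y \<otimes> g)" for g
  have "a \<one> * e g + a x * e (inv x \<otimes> g) = a1b g + a2b (inv x \<otimes> g)" for g
    unfolding e_def a1b_def a2b_def by (simp add: distrib_left mult.assoc[symmetric] r)
  then have "a \<one> * e g + a x * e (inv x \<otimes> g) = (if g = \<one> then 1 else 0)" if "g \<in> carrier G" for g
    using right_inverse_expanded[OF that] by simp
  moreover have "finite (supp G e)"
    using finite_C by (rule rev_finite_subset) (auto simp: supp_def e_def C_eq)
  ultimately show False
    using torsion_free_binomial_not_right_invertible[OF torsion_free x_closed x_ne_one] a_nonzero
    by blast
qed

lemma C_subset_supp_a1b_a2b: "C \<subseteq> supp G a1b \<union> supp G a2b"
proof
  fix g assume g: "g \<in> C"
  let ?det = "a \<one> * a (x \<otimes> y) - a x * a y"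
  have "?det * b g = a (x \<otimes> y) * a1b g - a y * a2b g"
    "?det * b (inv y \<otimes> g) = a \<one> * a2b g - a x * a1b g"
    unfolding a1b_def a2b_def by (simp_all add: algebra_simps)
  moreover have "?det \<noteq> 0" using det_nonzero by simp
  moreover have "b g \<noteq> 0 \<or> b (inv y \<otimes> g) \<noteq> 0" using g by (simp add: C_eq)
  ultimately have "a1b g \<noteq> 0 \<or> a2b g \<noteq> 0" by auto
  then show "g \<in> supp G a1b \<union> supp G a2b" using g C_subset_carrier by (auto simp: supp_def)
qed

lemma Conly_subset_supp_a1b_a2b: "Conly \<subseteq> supp G a1b \<inter> supp G a2b"
  using a_nonzero by (auto simp: Conly_def C_eq Cboth_eq supp_def a1b_def a2b_def)

lemma Conly_nonempty: "Conly \<noteq> {}"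
proof -
  obtain p where "p \<in> B" "y \<otimes> p \<notin> B"
    using torsion_free_exit_point[OF torsion_free y_closed y_ne_one finite_B B_subset_carrier B_nonempty] .
  then have "y \<otimes> p \<in> Conly" by (auto simp: Conly_def C_def Cboth_def l_coset_def)
  then show ?thesis by blast
qed

lemma Cboth_translates_mem_C:
  assumes "e \<in> Cboth"
  shows "y \<otimes> e \<in> C" "inv y \<otimes> e \<in> C"
proof -
  have e: "e \<in> carrier G" "b e \<noteq> 0" "b (inv y \<otimes> e) \<noteq> 0" using assms by (auto simp: Cboth_eq)
  then have "inv y \<otimes> (y \<otimes> e) = e" by (simp add: m_assoc[symmetric])
  then show "y \<otimes> e \<in> C" "inv y \<otimes> e \<in> C" using e by (auto simp: C_eq)
qed

lemma one_mem_T: "\<one> \<in> T"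
proof (cases "a1b \<one> = 0")
  case True
  then have "inv x \<in> supp G a2b" using a1b_one_add_a2b by (auto simp: supp_def)
  then have "x \<otimes> inv x \<in> x <# supp G a2b" unfolding l_coset_eq_image by (rule imageI)
  then show ?thesis by (simp add: T_def)
next
  case False
  then show ?thesis by (simp add: T_def supp_def)
qed

lemma T_diff_one_subset: "T - {\<one>} \<subseteq> C \<inter> (x <# C)"
proof
  fix g assume g: "g \<in> T - {\<one>}"
  have "T \<subseteq> carrier G"
    using supp_subset_carrier[of G a1b] l_coset_subset_G[OF supp_subset_carrier[of G a2b] x_closed]
    by (simp add: T_def)
  then have gc: "g \<in> carrier G" using g by blast
  have ix: "inv x \<otimes> g \<in> carrier G" using gc by simp
  have "a1b g \<noteq> 0 \<longleftrightarrow> a2b (inv x \<otimes> g) \<noteq> 0" using a1b_eq_neg_a2b[OF gc] g by simp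
  moreover have "g \<in> x <# supp G a2b \<longleftrightarrow> a2b (inv x \<otimes> g) \<noteq> 0"
    using mem_l_coset_iff[OF x_closed gc supp_subset_carrier] ix by (simp add: supp_def)
  ultimately have "g \<in> supp G a1b" "g \<in> x <# supp G a2b" using g gc by (auto simp: T_def supp_def)
  moreover have "x <# supp G a2b \<subseteq> x <# C" using supp_a2b_subset_C by (auto simp: l_coset_def)
  ultimately show "g \<in> C \<inter> (x <# C)" using supp_a1b_subset_C by auto
qed

lemma finite_T: "finite T"
  using finite_C supp_a1b_subset_C supp_a2b_subset_C
  by (auto simp: T_def l_coset_eq_image intro: finite_subset)

lemma Conly_subset_T: "Conly \<subseteq> T" "x <# Conly \<subseteq> T"
  using Conly_subset_supp_a1b_a2b by (auto simp: T_def l_coset_def)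

lemma finite_Conly: "finite Conly"
  using finite_C by (simp add: Conly_def)

lemma Conly_subset_carrier: "Conly \<subseteq> carrier G"
  using C_subset_carrier by (auto simp: Conly_def)

text \<open>The configuration T = Conly \<union> {x p}, with x p the exit point of Conly, is the only one
  in which the count of card_Conly_less can fail; it confines Conly, and then C, to a segment of an
  orbit of x^-1.\<close>

lemma C_subset_chain_if_tight:
  assumes tight: "T = insert w Conly" and chain: "Conly = (\<lambda>i. inv x [^] Suc i \<otimes> w) ` {..<k}"
    and w: "w \<in> carrier G"
  shows "C \<subseteq> (\<lambda>i. inv x [^] i \<otimes> w) ` {..Suc k}"
proof -
  have T_chain: "g \<in> (\<lambda>i. inv x [^] i \<otimes> w) ` {..k}" if gT: "g \<in> T" for g
  proof (cases "g = w")
    case True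
    then show ?thesis using w by (intro image_eqI[where x = 0]) auto
  next
    case False
    then obtain i where "i < k" "g = inv x [^] Suc i \<otimes> w" using gT tight chain by blast
    then show ?thesis by (intro image_eqI[where x = "Suc i"]) auto
  qed
  show ?thesis
  proof
    fix g assume g: "g \<in> C"
    then have gc: "g \<in> carrier G" using C_subset_carrier by blast
    consider "g \<in> supp G a1b" | "g \<in> supp G a2b" using g C_subset_supp_a1b_a2b by blast
    then show "g \<in> (\<lambda>i. inv x [^] i \<otimes> w) ` {..Suc k}"
    proof cases
      case 1
      then show ?thesis using T_chain[of g] by (auto simp: T_def)
    next
      case 2
      then have "x \<otimes> g \<in> T" by (auto simp: T_def l_coset_def)
      then obtain i where i: "i \<le> k" "x \<otimes> g = inv x [^] i \<otimes> w" using T_chain by auto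
      have "g = inv x \<otimes> (x \<otimes> g)" using gc by (simp add: m_assoc[symmetric])
      also have "\<dots> = inv x [^] Suc i \<otimes> w" using i(2) w by (simp add: mult_nat_pow_mult)
      finally show ?thesis using i(1) by (intro image_eqI[where x = "Suc i"]) auto
    qed
  qed
qed

lemma Cboth_endpoint_if_tight:
  assumes p: "p \<in> Conly" "x \<otimes> p \<notin> Conly" and tight: "T = insert (x \<otimes> p) Conly"
    and one: "\<one> \<notin> C \<inter> (x <# C)"
    and chain: "Conly = (\<lambda>i. inv x [^] Suc i \<otimes> (x \<otimes> p)) ` {..<k}" "0 < k"
  obtains e where "e \<in> Cboth" "e = x \<otimes> p \<or> e = inv x [^] Suc k \<otimes> (x \<otimes> p)"
proof (cases "\<one> \<in> C")
  case True
  have pc: "p \<in> carrier G" using p Conly_subset_carrier by blast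
  have "inv x \<notin> C"
  proof
    assume "inv x \<in> C"
    then have "x \<otimes> inv x \<in> x <# C" unfolding l_coset_eq_image by (rule imageI)
    then show False using True one by simp
  qed
  then have "x \<otimes> p \<noteq> \<one>"
    using p(1) pc inv_solve_left[of p x \<one>] by (auto simp: Conly_def)
  then have "x \<otimes> p \<in> C" using tight T_diff_one_subset by blast
  then have "x \<otimes> p \<in> Cboth" using p(2) by (simp add: Conly_def)
  then show thesis using that by blast
next
  case False
  define w where "w = x \<otimes> p"
  have "\<one> \<notin> Conly" using False by (simp add: Conly_def)
  then have "w = \<one>" using one_mem_T tight by (simp add: w_def)
  define f where "f = inv x [^] k \<otimes> w"
  have "f \<in> Conly"
    unfolding chain(1) f_def w_def using chain(2) by (intro image_eqI[where x = "k - 1"]) auto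
  then have fc: "f \<in> carrier G" "f \<noteq> \<one>" "a1b f \<noteq> 0"
    using False Conly_subset_supp_a1b_a2b by (auto simp: Conly_def supp_def)
  then have "a2b (inv x \<otimes> f) \<noteq> 0" using a1b_eq_neg_a2b by simp
  then have "inv x \<otimes> f \<in> C" using fc supp_a2b_subset_C by (auto simp: supp_def)
  moreover have "inv x \<otimes> f = inv x [^] Suc k \<otimes> w"
    unfolding f_def by (rule mult_nat_pow_mult) (simp_all add: \<open>w = \<one>\<close>)
  moreover have "inv x [^] Suc k \<otimes> w \<notin> Conly"
  proof
    assume "inv x [^] Suc k \<otimes> w \<in> Conly"
    then obtain i where "i < k" "inv x [^] Suc k \<otimes> w = inv x [^] Suc i \<otimes> w"
      using chain(1) by (auto simp: w_def)
    then show False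
      using torsion_free_pow_inj[OF torsion_free, of "inv x"] x_ne_one \<open>w = \<one>\<close>
      by (auto simp: inj_def)
  qed
  ultimately have "inv x [^] Suc k \<otimes> w \<in> Cboth" by (simp add: Conly_def)
  then show thesis using that by (simp add: w_def)
qed

lemma tight_exit_impossible:
  assumes p: "p \<in> Conly" "x \<otimes> p \<notin> Conly" and tight: "T = insert (x \<otimes> p) Conly"
    and one: "\<one> \<notin> C \<inter> (x <# C)"
  shows False
proof -
  define w where "w = x \<otimes> p"
  have pc: "p \<in> carrier G" and wc: "w \<in> carrier G"
    using p(1) Conly_subset_carrier by (auto simp: w_def)
  have stable: "x \<otimes> s \<in> Conly" if "s \<in> Conly" "s \<noteq> p" for s
  proof -
    have "x \<otimes> s \<in> T" using that Conly_subset_T(2) by (auto simp: l_coset_def)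
    moreover have "x \<otimes> s \<noteq> x \<otimes> p" using that pc Conly_subset_carrier by auto
    ultimately show ?thesis using tight by simp
  qed
  obtain k :: nat where k: "0 < k" "Conly = (\<lambda>i. inv x [^] i \<otimes> p) ` {..<k}"
    using torsion_free_chain[OF torsion_free x_closed x_ne_one finite_Conly Conly_subset_carrier
        p(1) stable] .
  have "inv x \<otimes> (x \<otimes> p) = p" using pc by (simp add: m_assoc[symmetric])
  then have "inv x [^] i \<otimes> p = inv x [^] Suc i \<otimes> w" for i :: nat
    using pc by (simp add: w_def m_assoc)
  then have chain: "Conly = (\<lambda>i. inv x [^] Suc i \<otimes> w) ` {..<k}" using k(2) by simp
  obtain e where e: "e \<in> Cboth" "e = w \<or> e = inv x [^] Suc k \<otimes> w"
    using Cboth_endpoint_if_tight[OF p tight one chain[unfolded w_def] k(1)] by (auto simp: w_def)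
  have C_chain: "C \<subseteq> (\<lambda>i. inv x [^] i \<otimes> w) ` {..Suc k}"
    using C_subset_chain_if_tight[OF tight[folded w_def] chain wc] .
  obtain i where i: "i \<le> Suc k" "y \<otimes> e = inv x [^] i \<otimes> w"
    using Cboth_translates_mem_C(1)[OF e(1)] C_chain by blast
  obtain j where j: "j \<le> Suc k" "inv y \<otimes> e = inv x [^] j \<otimes> w"
    using Cboth_translates_mem_C(2)[OF e(1)] C_chain by blast
  have "y = \<one>"
    using torsion_free_chain_endpoint[OF torsion_free _ wc y_closed e(2) i(2) i(1) j(2) j(1)] by simp
  then show False using y_ne_one by simp
qed

lemma card_Conly_less: "card Conly < card (C \<inter> (x <# C))"
proof -
  obtain p where p: "p \<in> Conly" "x \<otimes> p \<notin> Conly"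
    using torsion_free_exit_point[OF torsion_free x_closed x_ne_one finite_Conly Conly_subset_carrier
        Conly_nonempty] .
  let ?K = "insert (x \<otimes> p) Conly"
  have "?K \<subseteq> T" using Conly_subset_T p(1) by (auto simp: l_coset_def)
  have card_K: "card ?K = Suc (card Conly)" using finite_Conly p(2) by simp
  have fin: "finite (C \<inter> (x <# C))" using finite_C by simp
  consider "\<one> \<in> C \<inter> (x <# C)"
    | "\<one> \<notin> C \<inter> (x <# C)" "?K \<subset> T"
    | "\<one> \<notin> C \<inter> (x <# C)" "T = ?K"
    using \<open>?K \<subseteq> T\<close> by (auto simp: psubset_eq)
  then show ?thesis
  proof cases
    case 1
    then have "T \<subseteq> C \<inter> (x <# C)" using T_diff_one_subset by auto
    with \<open>?K \<subseteq> T\<close> have "?K \<subseteq> C \<inter> (x <# C)" by (rule subset_trans)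
    then have "card ?K \<le> card (C \<inter> (x <# C))" using card_mono[OF fin] by blast
    then show ?thesis using card_K by simp
  next
    case 2
    then have "card ?K < card T" using finite_T by (simp add: psubset_card_mono)
    moreover have "card (T - {\<one>}) = card T - 1" using one_mem_T finite_T by simp
    moreover have "card (T - {\<one>}) \<le> card (C \<inter> (x <# C))"
      using card_mono[OF fin T_diff_one_subset] .
    ultimately show ?thesis using card_K by linarith
  next
    case 3
    then show ?thesis using tight_exit_impossible p by blast
  qed
qed

lemma card_set_mult_supp_le: "card (supp G a <#> B) \<le> 2 * card B - 1"
proof -
  have eq: "supp G a <#> B = C \<union> (x <# C)"
    using set_mult_four_eq[OF x_closed y_closed B_subset_carrier] by (simp add: supp_a C_def)
  moreover have "card (C \<union> (x <# C)) + card (C \<inter> (x <# C)) = 2 * card C"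
    using card_Un_Int[OF finite_C, of "x <# C"] finite_C card_l_coset[OF x_closed C_subset_carrier]
    by (simp add: l_coset_eq_image)
  moreover have "card Cboth \<le> card C" using card_mono[OF finite_C Cboth_subset_C] .
  ultimately show ?thesis
    unfolding eq using card_Conly_less card_Conly card_C_add_card_Cboth by linarith
qed

end

theorem mainTheorem16:
  fixes G :: "('g, 'm) monoid_scheme" and a b :: "'g \<Rightarrow> 'f::field" and x y :: 'g
  assumes "group G" and "torsion_free G"
    and "gr_unit G a"
    and "x \<in> carrier G" and "y \<in> carrier G"
    and "x \<noteq> y" and "x \<noteq> \<one>\<^bsub>G\<^esub>" and "y \<noteq> \<one>\<^bsub>G\<^esub>"
    and "supp G a = {\<one>\<^bsub>G\<^esub>, x, y, x \<otimes>\<^bsub>G\<^esub> y}"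
    and "is_mate G a b"
  shows "card (supp G a <#>\<^bsub>G\<^esub> supp G b) \<le> 2 * card (supp G b) - 1"
proof -
  have a: "a \<in> grp_ring G" using \<open>gr_unit G a\<close> by (simp add: gr_unit_def)
  have b: "b \<in> grp_ring G" and ab: "gr_mult G a b = gr_one G"
    using \<open>is_mate G a b\<close> by (simp_all add: is_mate_def)
  show ?thesis
  proof (cases "x \<otimes>\<^bsub>G\<^esub> y = \<one>\<^bsub>G\<^esub>")
    case True
    then have "supp G a = {\<one>\<^bsub>G\<^esub>, x, y}" using assms(9) by auto
    then have "card (supp G a) = 3" using assms(6-8) by simp
    moreover have "2 * card (supp G a <#>\<^bsub>G\<^esub> supp G b) \<le> card (supp G a) * card (supp G b) + 1"
      using group.double_card_set_mult_supp_le[OF \<open>group G\<close> a b ab] .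
    moreover obtain t where "t \<in> supp G b"
      using group.supp_nonempty_if_right_inverse[OF \<open>group G\<close> ab] by blast
    then have "card (supp G a) \<le> card (supp G a <#>\<^bsub>G\<^esub> supp G b)"
      using group.card_le_card_set_mult[OF \<open>group G\<close> finite_supp[OF a] finite_supp[OF b]
          supp_subset_carrier supp_subset_carrier]
      by blast
    ultimately show ?thesis by presburger
  next
    case False
    interpret four_term_unit G a b x y
      using assms False b ab by (intro four_term_unit.intro four_term_unit_axioms.intro) auto
    show ?thesis by (rule card_set_mult_supp_le)
  qed
qed

end
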